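(* A finite simple graph $G$ admits an $\mathcal{F}$-free circular ordering if and only if $G$ is a forest.
   Context: A circular ordering of a finite set is obtained by placing its elements at distinct points of a circle; it is the set of triples $(x,y,z)$ of distinct elements such that clockwise from $x$ one meets $y$ before $z$. A circularly ordered graph is a graph together with a circular ordering of its vertices; isomorphism means a graph isomorphism preserving the circular orderings; $(H,C_H)$ is an induced circularly ordered subgraph of $(G,C_G)$ if $H$ is an induced subgraph of $G$ and $C_H$ is the restriction of $C_G$. A graph $G$ admits an $\mathcal{F}$-free circular ordering if there is a circular ordering $C$ of $V(G)$ such that no induced circularly ordered subgraph of $(G,C)$ is isomorphic to a member of $\mathcal{F}$. Here $\mathcal{F}$ consists of the following seven circularly ordered graphs, where in each case the vertices $v_1,v_2,\dots$ appear clockwise in this order and the listed edges are all the edges: (1) the triangle on $v_1,v_2,v_3$; (2) on $v_1,\dots,v_4$, edges $v_1v_2,v_2v_3,v_3v_4,v_4v_1$; (3) on $v_1,\dots,v_4$, edges $v_1v_2,v_2v_4,v_4v_3,v_3v_1$; (4) on $v_1,\dots,v_4$, edges $v_1v_3,v_2v_4$; (5) on $v_1,\dots,v_4$, edges $v_1v_3,v_1v_4,v_2v_4$; (6) on $v_1,\dots,v_5$, edges $v_1v_2,v_2v_3,v_3v_4,v_4v_5,v_5v_1$; (7) on $v_1,\dots,v_5$, edges $v_1v_2,v_2v_3,v_3v_4,v_4v_5$. *)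

theory Defs
  imports Main
begin

definition simple_graph :: "'a set \<Rightarrow> ('a \<Rightarrow> 'a \<Rightarrow> bool) \<Rightarrow> bool" where
  "simple_graph V E \<longleftrightarrow> finite V \<and> (\<forall>x y. E x y \<longrightarrow> E y x)
     \<and> (\<forall>x. \<not> E x x) \<and> (\<forall>x y. E x y \<longrightarrow> x \<in> V \<and> y \<in> V)"

text \<open>Clockwise relation induced by positions on a circle (positions are distinct
naturals read clockwise): clockwise from x one meets y before z.\<close>

definition cyc_pos :: "('a \<Rightarrow> nat) \<Rightarrow> 'a \<Rightarrow> 'a \<Rightarrow> 'a \<Rightarrow> bool" where
  "cyc_pos p x y z \<longleftrightarrow>
     (p x < p y \<and> p y < p z) \<or> (p y < p z \<and> p z < p x) \<or> (p z < p x \<and> p x < p y)"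

definition circular_ordering :: "'a set \<Rightarrow> ('a \<Rightarrow> 'a \<Rightarrow> 'a \<Rightarrow> bool) \<Rightarrow> bool" where
  "circular_ordering V C \<longleftrightarrow>
     (\<exists>p. inj_on p V \<and>
        (\<forall>x y z. C x y z \<longleftrightarrow> x \<in> V \<and> y \<in> V \<and> z \<in> V \<and>
                  x \<noteq> y \<and> y \<noteq> z \<and> x \<noteq> z \<and> cyc_pos p x y z))"

text \<open>A circularly ordered pattern graph: vertices 0,...,k-1 appearing clockwise
in this order (i.e. v_1,...,v_k with v_{i+1} represented by i), together with its
list of edges.\<close>

type_synonym pattern = "nat \<times> (nat \<times> nat) list"

definition pat_adj :: "pattern \<Rightarrow> nat \<Rightarrow> nat \<Rightarrow> bool" where
  "pat_adj P i j \<longleftrightarrow> (i, j) \<in> set (snd P) \<or> (j, i) \<in> set (snd P)"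

definition contains_pattern ::
  "'a set \<Rightarrow> ('a \<Rightarrow> 'a \<Rightarrow> bool) \<Rightarrow> ('a \<Rightarrow> 'a \<Rightarrow> 'a \<Rightarrow> bool) \<Rightarrow> pattern \<Rightarrow> bool" where
  "contains_pattern V E C P \<longleftrightarrow>
     (\<exists>g. inj_on g {0..<fst P} \<and> g ` {0..<fst P} \<subseteq> V \<and>
        (\<forall>i<fst P. \<forall>j<fst P. E (g i) (g j) \<longleftrightarrow> pat_adj P i j) \<and>
        (\<forall>i<fst P. \<forall>j<fst P. \<forall>l<fst P. i \<noteq> j \<and> j \<noteq> l \<and> i \<noteq> l \<longrightarrow>
            (C (g i) (g j) (g l) \<longleftrightarrow> cyc_pos id i j l)))"

text \<open>The family F of seven forbidden circularly ordered graphs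
(vertex v_m is represented by index m-1).\<close>

definition forbidden :: "pattern list" where
  "forbidden =
    [ (3, [(0,1),(1,2),(2,0)]),
      (4, [(0,1),(1,2),(2,3),(3,0)]),
      (4, [(0,1),(1,3),(3,2),(2,0)]),
      (4, [(0,2),(1,3)]),
      (4, [(0,2),(0,3),(1,3)]),
      (5, [(0,1),(1,2),(2,3),(3,4),(4,0)]),
      (5, [(0,1),(1,2),(2,3),(3,4)]) ]"

definition admits_F_free_circular_ordering :: "'a set \<Rightarrow> ('a \<Rightarrow> 'a \<Rightarrow> bool) \<Rightarrow> bool" where
  "admits_F_free_circular_ordering V E \<longleftrightarrow>
     (\<exists>C. circular_ordering V C \<and> (\<forall>P\<in>set forbidden. \<not> contains_pattern V E C P))"

definition is_forest :: "'a set \<Rightarrow> ('a \<Rightarrow> 'a \<Rightarrow> bool) \<Rightarrow> bool" where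
  "is_forest V E \<longleftrightarrow>
     \<not> (\<exists>cs. length cs \<ge> 3 \<and> distinct cs \<and> set cs \<subseteq> V \<and>
            (\<forall>i. Suc i < length cs \<longrightarrow> E (cs ! i) (cs ! Suc i)) \<and>
            E (last cs) (hd cs))"

end

theory Submission
  imports Defs
begin

text \<open>
  A forest is laid out by adding leaves one
  at a time, each immediately next to its neighbour, on the side prescribed by a proper
  2-colouring. No two edges of such a layout cross, and a path with three edges leaves its
  first vertex clockwise only if that vertex has colour \<open>True\<close>, counterclockwise only if it has
  colour \<open>False\<close>. Hence the forbidden graphs (1), (2), (3), (6) do not occur because they are
  cycles, (4) and (5) because they have crossing edges, and (7) because the two ends of a path
  with four edges have the same colour.

  Conversely, let \<open>G\<close> have a cycle. A triangle is (1); in a triangle-free graph two crossing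
  edges span (3), (4) or (5). Without crossings, positions increase along a shortest cycle read
  from its leftmost vertex in the right direction, and since a shortest cycle is induced its
  first four or five vertices form (2), (6) or (7).
\<close>

section \<open>Circular orderings given by positions\<close>

lemma cyc_pos_order_cong:
  assumes "\<And>a b. a \<in> A \<Longrightarrow> b \<in> A \<Longrightarrow> q a < q b \<longleftrightarrow> p a < p b"
    and "x \<in> A" "y \<in> A" "z \<in> A"
  shows "cyc_pos q x y z \<longleftrightarrow> cyc_pos p x y z"
  using assms by (simp add: cyc_pos_def)

definition circ_order :: "'a set \<Rightarrow> ('a \<Rightarrow> nat) \<Rightarrow> 'a \<Rightarrow> 'a \<Rightarrow> 'a \<Rightarrow> bool" where
  "circ_order V p x y z \<longleftrightarrow> x \<in> V \<and> y \<in> V \<and> z \<in> V \<and> cyc_pos p x y z"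

lemma circular_ordering_circ_order: "inj_on p V \<Longrightarrow> circular_ordering V (circ_order V p)"
  unfolding circular_ordering_def circ_order_def by (auto simp: cyc_pos_def)

lemma circular_orderingE:
  assumes "circular_ordering V C"
  obtains p where "inj_on p V" "C = circ_order V p"
proof -
  obtain p where inj: "inj_on p V"
    and C: "\<forall>x y z. C x y z \<longleftrightarrow> x \<in> V \<and> y \<in> V \<and> z \<in> V \<and>
                  x \<noteq> y \<and> y \<noteq> z \<and> x \<noteq> z \<and> cyc_pos p x y z"
    using assms unfolding circular_ordering_def by blast
  have "C = circ_order V p"
    using C by (intro ext) (auto simp: circ_order_def cyc_pos_def)
  with inj show thesis by (rule that)
qed

lemma cyc_pos_iff_index_order:
  assumes sorted: "\<And>a b c. a < b \<Longrightarrow> b < c \<Longrightarrow> c < k \<Longrightarrow> cyc_pos p (f a) (f b) (f c)"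
    and "i < k" "j < k" "l < k" "i \<noteq> j" "j \<noteq> l" "i \<noteq> l"
  shows "cyc_pos p (f i) (f j) (f l) \<longleftrightarrow> cyc_pos id i j l"
proof -
  consider "i < j" "j < l" | "j < l" "l < i" | "l < i" "i < j"
    | "i < l" "l < j" | "l < j" "j < i" | "j < i" "i < l"
    using assms(5-7) by linarith
  then show ?thesis
  proof cases
    case 1 then show ?thesis using sorted[of i j l] assms(4) by (simp add: cyc_pos_def)
  next
    case 2 then show ?thesis using sorted[of j l i] assms(2) by (auto simp: cyc_pos_def)
  next
    case 3 then show ?thesis using sorted[of l i j] assms(3) by (auto simp: cyc_pos_def)
  next
    case 4 then show ?thesis using sorted[of i l j] assms(3) by (auto simp: cyc_pos_def)
  next
    case 5 then show ?thesis using sorted[of l j i] assms(2) by (auto simp: cyc_pos_def)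
  next
    case 6 then show ?thesis using sorted[of j i l] assms(4) by (auto simp: cyc_pos_def)
  qed
qed

lemma contains_pattern_if_cyclically_ordered:
  assumes "distinct xs" "set xs \<subseteq> V" "length xs = fst P"
    and "\<forall>i<fst P. \<forall>j<fst P. E (xs ! i) (xs ! j) \<longleftrightarrow> pat_adj P i j"
    and "\<forall>l<fst P. \<forall>j<l. \<forall>i<j. cyc_pos p (xs ! i) (xs ! j) (xs ! l)"
  shows "contains_pattern V E (circ_order V p) P"
  unfolding contains_pattern_def
proof (intro exI conjI)
  show "inj_on (nth xs) {0..<fst P}"
    using assms(1,3) by (simp add: inj_on_nth)
  show "nth xs ` {0..<fst P} \<subseteq> V"
    using assms(2,3) by auto
  show "\<forall>i<fst P. \<forall>j<fst P. E (xs ! i) (xs ! j) \<longleftrightarrow> pat_adj P i j"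
    by fact
  show "\<forall>i<fst P. \<forall>j<fst P. \<forall>l<fst P. i \<noteq> j \<and> j \<noteq> l \<and> i \<noteq> l \<longrightarrow>
      circ_order V p (xs ! i) (xs ! j) (xs ! l) \<longleftrightarrow> cyc_pos id i j l"
  proof (intro allI impI)
    fix i j l assume "i < fst P" "j < fst P" "l < fst P" "i \<noteq> j \<and> j \<noteq> l \<and> i \<noteq> l"
    moreover have "xs ! i \<in> V" "xs ! j \<in> V" "xs ! l \<in> V"
      using assms(2,3) calculation by auto
    moreover have "cyc_pos p (xs ! i) (xs ! j) (xs ! l) \<longleftrightarrow> cyc_pos id i j l"
      using assms(5) calculation by (intro cyc_pos_iff_index_order[where k = "fst P"]) auto
    ultimately show "circ_order V p (xs ! i) (xs ! j) (xs ! l) \<longleftrightarrow> cyc_pos id i j l"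
      by (simp add: circ_order_def)
  qed
qed

lemma contains_patternE:
  assumes "contains_pattern V E (circ_order V p) P"
  obtains g where "\<And>i. i < fst P \<Longrightarrow> g i \<in> V"
    and "\<And>i j. i < fst P \<Longrightarrow> j < fst P \<Longrightarrow> g i = g j \<longleftrightarrow> i = j"
    and "\<And>i j. i < fst P \<Longrightarrow> j < fst P \<Longrightarrow> E (g i) (g j) \<longleftrightarrow> pat_adj P i j"
    and "\<And>i j l. i < j \<Longrightarrow> j < l \<Longrightarrow> l < fst P \<Longrightarrow> cyc_pos p (g i) (g j) (g l)"
proof -
  obtain g where "inj_on g {0..<fst P}" "g ` {0..<fst P} \<subseteq> V"
    and "\<forall>i<fst P. \<forall>j<fst P. E (g i) (g j) \<longleftrightarrow> pat_adj P i j"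
    and ord: "\<forall>i<fst P. \<forall>j<fst P. \<forall>l<fst P. i \<noteq> j \<and> j \<noteq> l \<and> i \<noteq> l \<longrightarrow>
            (circ_order V p (g i) (g j) (g l) \<longleftrightarrow> cyc_pos id i j l)"
    using assms unfolding contains_pattern_def by blast
  moreover have "cyc_pos p (g i) (g j) (g l)" if "i < j" "j < l" "l < fst P" for i j l
  proof -
    have "circ_order V p (g i) (g j) (g l) \<longleftrightarrow> cyc_pos id i j l"
      using ord that by simp
    then show ?thesis
      using that by (simp add: circ_order_def cyc_pos_def)
  qed
  ultimately show thesis
    by (intro that[of g]) (auto simp: inj_on_eq_iff)
qed

section \<open>Forests admit an F-free circular ordering\<close>

definition is_path :: "'a set \<Rightarrow> ('a \<Rightarrow> 'a \<Rightarrow> bool) \<Rightarrow> 'a list \<Rightarrow> bool" where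
  "is_path V E ps \<longleftrightarrow>
     distinct ps \<and> set ps \<subseteq> V \<and> (\<forall>i. Suc i < length ps \<longrightarrow> E (ps ! i) (ps ! Suc i))"

lemma is_forest_iff_no_closed_path:
  "is_forest V E \<longleftrightarrow> \<not> (\<exists>cs. 3 \<le> length cs \<and> is_path V E cs \<and> E (last cs) (hd cs))"
  unfolding is_forest_def is_path_def by blast

lemma forest_path_head_adj:
  assumes "simple_graph V E" "is_forest V E" "is_path V E ps"
    and "j < length ps" "E (ps ! 0) (ps ! j)"
  shows "j = 1"
proof (rule ccontr)
  let ?cs = "take (Suc j) ps"
  assume "j \<noteq> 1"
  moreover have "j \<noteq> 0"
    using assms(1,5) unfolding simple_graph_def by (cases "j = 0") auto
  ultimately have "3 \<le> length ?cs"
    using assms(4) by simp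
  moreover have "is_path V E ?cs"
    using assms(3) unfolding is_path_def by (auto dest: in_set_takeD)
  moreover have "E (last ?cs) (hd ?cs)"
  proof -
    have "last ?cs = ps ! j" "hd ?cs = ps ! 0"
      using assms(4) by (simp add: take_Suc_conv_app_nth, cases ps, simp_all)
    then show ?thesis
      using assms(1,5) unfolding simple_graph_def by simp
  qed
  ultimately show False
    using assms(2) unfolding is_forest_iff_no_closed_path by blast
qed

lemma forest_has_leaf:
  assumes graph: "simple_graph V E" and forest: "is_forest V E" and "V \<noteq> {}"
  shows "\<exists>v\<in>V. \<forall>x y. E v x \<longrightarrow> E v y \<longrightarrow> x = y"
proof -
  obtain v0 where "v0 \<in> V"
    using \<open>V \<noteq> {}\<close> by blast
  then have "is_path V E [v0]"
    by (simp add: is_path_def)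
  moreover have "length ps < Suc (card V)" if "is_path V E ps" for ps
    using that graph unfolding is_path_def simple_graph_def
    by (metis card_mono distinct_card le_imp_less_Suc)
  ultimately obtain ps where ps: "is_path V E ps" "length ps \<ge> 1"
    and longest: "\<And>qs. is_path V E qs \<Longrightarrow> length qs \<le> length ps"
    using Lattices_Big.ex_has_greatest_nat[of "is_path V E" "[v0]" length "Suc (card V)"]
    by fastforce
  have "ps ! 0 \<in> V"
    using ps unfolding is_path_def by (force intro: nth_mem)
  moreover have "y = ps ! 1" if "E (ps ! 0) y" for y
  proof -
    have "y \<in> set ps"
    proof (rule ccontr)
      assume "y \<notin> set ps"
      with ps that graph have "is_path V E (y # ps)"
        unfolding is_path_def simple_graph_def by (auto simp: nth_Cons split: nat.split)
      then show False
        using longest by fastforce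
    qed
    then obtain j where "j < length ps" "y = ps ! j"
      by (auto simp: in_set_conv_nth)
    then show ?thesis
      using forest_path_head_adj[OF graph forest ps(1)] that by blast
  qed
  ultimately show ?thesis
    by blast
qed

definition crossing_free :: "('a \<Rightarrow> 'a \<Rightarrow> bool) \<Rightarrow> ('a \<Rightarrow> nat) \<Rightarrow> bool" where
  "crossing_free E p \<longleftrightarrow>
     (\<forall>a b c d. E a b \<longrightarrow> E c d \<longrightarrow> \<not> (cyc_pos p a c b \<and> cyc_pos p b d a))"

definition clockwise4 :: "('a \<Rightarrow> nat) \<Rightarrow> 'a \<Rightarrow> 'a \<Rightarrow> 'a \<Rightarrow> 'a \<Rightarrow> bool" where
  "clockwise4 p a b c d \<longleftrightarrow> cyc_pos p a b c \<and> cyc_pos p a c d"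

text \<open>The colour \<open>col u\<close> fixes the direction in which paths with three edges may leave \<open>u\<close>.\<close>

definition admissible_layout ::
  "'a set \<Rightarrow> ('a \<Rightarrow> 'a \<Rightarrow> bool) \<Rightarrow> ('a \<Rightarrow> nat) \<Rightarrow> ('a \<Rightarrow> bool) \<Rightarrow> bool" where
  "admissible_layout V E p col \<longleftrightarrow> inj_on p V \<and> crossing_free E p \<and>
     (\<forall>a b. E a b \<longrightarrow> col a \<noteq> col b) \<and>
     (\<forall>u x y z. E u x \<longrightarrow> E x y \<longrightarrow> E y z \<longrightarrow>
        (clockwise4 p u x y z \<longrightarrow> col u) \<and> (clockwise4 p u z y x \<longrightarrow> \<not> col u))"

lemma successor_chord_crosses_nothing:
  assumes "p y = Suc (p x)" "{a, b} = {x, y} \<or> {c, d} = {x, y}"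
  shows "\<not> (cyc_pos p a c b \<and> cyc_pos p b d a)"
  using assms by (auto simp: cyc_pos_def doubleton_eq_iff)

lemma crossing_free_no_interleaving:
  assumes "crossing_free E p" "E a b" "E c d"
  shows "\<not> (p a < p c \<and> p c < p b \<and> p b < p d)"
proof -
  have "\<not> (cyc_pos p a c b \<and> cyc_pos p b d a)"
    using assms unfolding crossing_free_def by blast
  then show ?thesis
    by (auto simp: cyc_pos_def)
qed

lemma clockwise4_distinct: "clockwise4 p a b c d \<Longrightarrow> distinct [a, b, c, d]"
  by (auto simp: clockwise4_def cyc_pos_def)

lemma inj_on_insert_order_preserving:
  fixes p q :: "'a \<Rightarrow> nat"
  assumes inj: "inj_on p V"
    and order: "\<And>x y. x \<noteq> v \<Longrightarrow> y \<noteq> v \<Longrightarrow> q x < q y \<longleftrightarrow> p x < p y"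
    and fresh: "\<And>w. w \<noteq> v \<Longrightarrow> q w \<noteq> q v"
  shows "inj_on q (insert v V)"
proof (rule inj_onI)
  fix x y assume "x \<in> insert v V" "y \<in> insert v V" "q x = q y"
  show "x = y"
  proof (cases "x = v \<or> y = v")
    case True
    then show ?thesis
      using fresh[of x] fresh[of y] \<open>q x = q y\<close> by metis
  next
    case False
    then have "q x < q y \<longleftrightarrow> p x < p y" "q y < q x \<longleftrightarrow> p y < p x"
      using order by blast+
    then have "p x = p y"
      using \<open>q x = q y\<close> by linarith
    then show ?thesis
      using False \<open>x \<in> insert v V\<close> \<open>y \<in> insert v V\<close> inj by (auto dest: inj_onD)
  qed
qed

lemma crossing_free_insert_leaf:
  fixes E :: "'a \<Rightarrow> 'a \<Rightarrow> bool" and v u :: 'a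
  defines "E' \<equiv> \<lambda>a b. E a b \<and> a \<noteq> v \<and> b \<noteq> v"
  assumes cross: "crossing_free E' p"
    and sym: "\<And>x y. E x y \<Longrightarrow> E y x" and leaf: "\<And>w. E v w \<Longrightarrow> w = u"
    and order: "\<And>x y. x \<noteq> v \<Longrightarrow> y \<noteq> v \<Longrightarrow> q x < q y \<longleftrightarrow> p x < p y"
    and next_to: "E v u \<Longrightarrow> q v = Suc (q u) \<or> q u = Suc (q v)"
  shows "crossing_free E q"
  unfolding crossing_free_def
proof (intro allI impI)
  fix a b c d assume "E a b" "E c d"
  show "\<not> (cyc_pos q a c b \<and> cyc_pos q b d a)"
  proof (cases "v \<in> {a, b, c, d}")
    case True
    have "E x y \<Longrightarrow> x = v \<or> y = v \<Longrightarrow> E v u \<and> {x, y} = {u, v}" for x y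
      using leaf sym by blast
    then have "E v u" and chord: "{a, b} = {u, v} \<or> {c, d} = {u, v}"
      using True \<open>E a b\<close> \<open>E c d\<close> by blast+
    from next_to[OF \<open>E v u\<close>] show ?thesis
    proof
      assume "q v = Suc (q u)"
      then show ?thesis
        using chord by (rule successor_chord_crosses_nothing)
    next
      assume "q u = Suc (q v)"
      moreover have "{a, b} = {v, u} \<or> {c, d} = {v, u}"
        using chord by (metis insert_commute)
      ultimately show ?thesis
        by (rule successor_chord_crosses_nothing)
    qed
  next
    case False
    then have "E' a b" "E' c d"
      using \<open>E a b\<close> \<open>E c d\<close> unfolding E'_def by auto
    moreover have "cyc_pos q x y z \<longleftrightarrow> cyc_pos p x y z" if "x \<noteq> v" "y \<noteq> v" "z \<noteq> v" for x y z
      using cyc_pos_order_cong[of "- {v}" q p] order that by blast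
    then have "cyc_pos q a c b \<longleftrightarrow> cyc_pos p a c b" "cyc_pos q b d a \<longleftrightarrow> cyc_pos p b d a"
      using False by auto
    ultimately show ?thesis
      using cross unfolding crossing_free_def by blast
  qed
qed

text \<open>The new leaf \<open>v\<close> sits immediately next to its neighbour \<open>u\<close>: after it if \<open>col u\<close>,
  before it otherwise. A 3-edge path through \<open>v\<close> starts or ends at \<open>v\<close>, and adjacency on the
  circle fixes its direction.\<close>

lemma path_directions_insert_leaf:
  fixes E :: "'a \<Rightarrow> 'a \<Rightarrow> bool" and col :: "'a \<Rightarrow> bool" and v u :: 'a
  defines "E' \<equiv> \<lambda>a b. E a b \<and> a \<noteq> v \<and> b \<noteq> v" and "col' \<equiv> col(v := \<not> col u)"
  assumes layout: "admissible_layout V E' p col"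
    and sym: "\<And>x y. E x y \<Longrightarrow> E y x"
    and leaf: "\<And>w. E v w \<Longrightarrow> w = u"
    and order: "\<And>x y. x \<noteq> v \<Longrightarrow> y \<noteq> v \<Longrightarrow> q x < q y \<longleftrightarrow> p x < p y"
    and next_to: "E v u \<Longrightarrow> if col u then q v = Suc (q u) else q u = Suc (q v)"
    and path: "E a x" "E x y" "E y z" "distinct [a, x, y, z]"
  shows "(clockwise4 q a x y z \<longrightarrow> col' a) \<and> (clockwise4 q a z y x \<longrightarrow> \<not> col' a)"
proof -
  have col: "\<And>a b. E' a b \<Longrightarrow> col a \<noteq> col b"
    and cw: "\<And>a x y z. E' a x \<Longrightarrow> E' x y \<Longrightarrow> E' y z \<Longrightarrow> clockwise4 p a x y z \<Longrightarrow> col a"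
    and ccw: "\<And>a x y z. E' a x \<Longrightarrow> E' x y \<Longrightarrow> E' y z \<Longrightarrow> clockwise4 p a z y x \<Longrightarrow> \<not> col a"
    using layout unfolding admissible_layout_def by blast+
  have "(E' a x \<and> E' x y \<and> E' y z) \<or> (a = v \<and> x = u \<and> E v u) \<or>
      (z = v \<and> y = u \<and> E v u \<and> E' a x \<and> E' x y)"
    using path leaf sym unfolding E'_def by auto
  then consider (old) "E' a x" "E' x y" "E' y z" | (start) "a = v" "x = u" "E v u"
    | (stop) "z = v" "y = u" "E v u" "E' a x" "E' x y"
    by blast
  then show ?thesis
  proof cases
    case old
    moreover have "cyc_pos q r s t \<longleftrightarrow> cyc_pos p r s t" if "r \<noteq> v" "s \<noteq> v" "t \<noteq> v" for r s t
      using cyc_pos_order_cong[of "- {v}" q p] order that by blast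
    ultimately show ?thesis
      using cw[of a x y z] ccw[of a x y z] unfolding clockwise4_def E'_def col'_def by auto
  next
    case start
    then show ?thesis
      using next_to unfolding clockwise4_def cyc_pos_def col'_def by (auto split: if_splits)
  next
    case stop
    then have "col a = col u"
      using col by blast
    then show ?thesis
      using stop next_to unfolding clockwise4_def cyc_pos_def E'_def col'_def by (auto split: if_splits)
  qed
qed

lemma admissible_layout_insert_leaf:
  fixes V :: "'a set" and E :: "'a \<Rightarrow> 'a \<Rightarrow> bool" and v u :: 'a
  defines "E' \<equiv> \<lambda>a b. E a b \<and> a \<noteq> v \<and> b \<noteq> v"
  assumes layout: "admissible_layout V E' p col"
    and sym: "\<And>x y. E x y \<Longrightarrow> E y x"
    and leaf: "\<And>w. E v w \<Longrightarrow> w = u"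
    and order: "\<And>x y. x \<noteq> v \<Longrightarrow> y \<noteq> v \<Longrightarrow> q x < q y \<longleftrightarrow> p x < p y"
    and fresh: "\<And>w. w \<noteq> v \<Longrightarrow> q w \<noteq> q v"
    and next_to: "E v u \<Longrightarrow> if col u then q v = Suc (q u) else q u = Suc (q v)"
  shows "admissible_layout (insert v V) E q (col(v := \<not> col u))"
proof -
  let ?col = "col(v := \<not> col u)"
  have inj: "inj_on p V" and cross: "crossing_free E' p"
    and col: "\<And>a b. E' a b \<Longrightarrow> col a \<noteq> col b"
    using layout unfolding admissible_layout_def by blast+
  have "E v u \<Longrightarrow> q v = Suc (q u) \<or> q u = Suc (q v)"
    using next_to by (auto split: if_splits)
  with cross sym leaf order have "crossing_free E q"
    unfolding E'_def by (rule crossing_free_insert_leaf)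
  moreover have "?col a \<noteq> ?col b" if "E a b" for a b
  proof (cases "a = v \<or> b = v")
    case True
    then have "E v u" "{a, b} = {u, v}"
      using that leaf sym by blast+
    moreover have "u \<noteq> v"
      using next_to[OF \<open>E v u\<close>] by (auto split: if_splits)
    ultimately show ?thesis
      by (auto simp: doubleton_eq_iff)
  next
    case False
    then show ?thesis
      using that col[of a b] unfolding E'_def by auto
  qed
  moreover have path_ok: "(clockwise4 q a x y z \<longrightarrow> ?col a) \<and> (clockwise4 q a z y x \<longrightarrow> \<not> ?col a)"
    if "E a x" "E x y" "E y z" "distinct [a, x, y, z]" for a x y z
    using layout sym leaf order next_to that unfolding E'_def by (rule path_directions_insert_leaf)
  moreover have "(clockwise4 q a x y z \<longrightarrow> ?col a) \<and> (clockwise4 q a z y x \<longrightarrow> \<not> ?col a)"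
    if "E a x" "E x y" "E y z" for a x y z
  proof (intro conjI impI)
    assume "clockwise4 q a x y z"
    then show "?col a"
      using path_ok[OF that clockwise4_distinct] by blast
  next
    assume "clockwise4 q a z y x"
    moreover from this have "distinct [a, x, y, z]"
      using clockwise4_distinct by fastforce
    ultimately show "\<not> ?col a"
      using path_ok[OF that] by blast
  qed
  ultimately show ?thesis
    using inj_on_insert_order_preserving[OF inj order fresh]
    unfolding admissible_layout_def by blast
qed

lemma forest_has_admissible_layout:
  assumes "simple_graph V E" "is_forest V E"
  shows "\<exists>p col. admissible_layout V E p col"
proof -
  have "finite V"
    using assms(1) by (simp add: simple_graph_def)
  then show ?thesis
    using assms
  proof (induction V arbitrary: E rule: finite_remove_induct)
    case empty
    then have "\<not> E a b" for a b
      by (simp add: simple_graph_def)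
    then show ?case
      by (auto simp: admissible_layout_def crossing_free_def)
  next
    case (remove A)
    obtain v where "v \<in> A" and leaf: "\<And>x y. E v x \<Longrightarrow> E v y \<Longrightarrow> x = y"
      using forest_has_leaf[OF remove.prems] remove.hyps(2) by blast
    obtain u where u: "\<And>w. E v w \<Longrightarrow> w = u"
      using leaf by blast
    define E' where "E' = (\<lambda>a b. E a b \<and> a \<noteq> v \<and> b \<noteq> v)"
    have "simple_graph (A - {v}) E'" "is_forest (A - {v}) E'"
      using remove.prems unfolding simple_graph_def is_forest_def E'_def by auto
    then obtain p col where layout: "admissible_layout (A - {v}) E' p col"
      using remove.IH[OF \<open>v \<in> A\<close>] by blast
    define k where "k = (if col u then Suc (p u) else p u)"
    define q where "q x = (if x = v then k else if k \<le> p x then Suc (p x) else p x)" for x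
    have "admissible_layout (insert v (A - {v})) E q (col(v := \<not> col u))"
    proof (rule admissible_layout_insert_leaf[OF layout[unfolded E'_def]])
      show "E x y \<Longrightarrow> E y x" for x y
        using remove.prems(1) by (simp add: simple_graph_def)
      show "E v w \<Longrightarrow> w = u" for w
        by (rule u)
      show "x \<noteq> v \<Longrightarrow> y \<noteq> v \<Longrightarrow> q x < q y \<longleftrightarrow> p x < p y" for x y
        by (auto simp: q_def)
      show "w \<noteq> v \<Longrightarrow> q w \<noteq> q v" for w
        by (auto simp: q_def)
      show "E v u \<Longrightarrow> if col u then q v = Suc (q u) else q u = Suc (q v)"
        using remove.prems(1) by (auto simp: q_def k_def simple_graph_def)
    qed
    then show ?case
      using \<open>v \<in> A\<close> insert_Diff by metis
  qed
qed

text \<open>The ends of a path with four edges have the same colour, yet the path leaves one end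
  clockwise and the other counterclockwise.\<close>

lemma admissible_layout_no_clockwise_P5:
  assumes layout: "admissible_layout V E p col" and sym: "\<And>x y. E x y \<Longrightarrow> E y x"
    and path: "E a b" "E b c" "E c d" "E d e"
    and "clockwise4 p a b c d" "clockwise4 p e b c d"
  shows False
proof -
  have col: "\<And>x y. E x y \<Longrightarrow> col x \<noteq> col y"
    and cw: "\<And>u x y z. E u x \<Longrightarrow> E x y \<Longrightarrow> E y z \<Longrightarrow> clockwise4 p u x y z \<Longrightarrow> col u"
    and ccw: "\<And>u x y z. E u x \<Longrightarrow> E x y \<Longrightarrow> E y z \<Longrightarrow> clockwise4 p u z y x \<Longrightarrow> \<not> col u"
    using layout unfolding admissible_layout_def by blast+
  have "col a" "\<not> col e"
    using cw[OF path(1-3)] ccw[OF sym[OF path(4)] sym[OF path(3)] sym[OF path(2)]] assms(7,8) by blast+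
  moreover have "col a = col e"
    using col[OF path(1)] col[OF path(2)] col[OF path(3)] col[OF path(4)] by blast
  ultimately show False
    by simp
qed

lemma admissible_layout_avoids_forbidden:
  assumes graph: "simple_graph V E" and forest: "is_forest V E"
    and layout: "admissible_layout V E p col"
    and "P \<in> set forbidden"
  shows "\<not> contains_pattern V E (circ_order V p) P"
proof
  assume "contains_pattern V E (circ_order V p) P"
  then obtain g where inV: "\<And>i. i < fst P \<Longrightarrow> g i \<in> V"
    and eq: "\<And>i j. i < fst P \<Longrightarrow> j < fst P \<Longrightarrow> g i = g j \<longleftrightarrow> i = j"
    and adj: "\<And>i j. i < fst P \<Longrightarrow> j < fst P \<Longrightarrow> E (g i) (g j) \<longleftrightarrow> pat_adj P i j"
    and ord: "\<And>i j l. i < j \<Longrightarrow> j < l \<Longrightarrow> l < fst P \<Longrightarrow> cyc_pos p (g i) (g j) (g l)"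
    by (rule contains_patternE) auto
  have no_cycle: "\<not> (is_path V E cs \<and> E (last cs) (hd cs))" if "3 \<le> length cs" for cs
    using forest that unfolding is_forest_iff_no_closed_path by blast
  have cross: "crossing_free E p"
    using layout unfolding admissible_layout_def by blast
  from \<open>P \<in> set forbidden\<close> consider
      "P = (3, [(0,1),(1,2),(2,0)])" | "P = (4, [(0,1),(1,2),(2,3),(3,0)])" |
      "P = (4, [(0,1),(1,3),(3,2),(2,0)])" | "P = (5, [(0,1),(1,2),(2,3),(3,4),(4,0)])" |
      "P = (4, [(0,2),(1,3)])" | "P = (4, [(0,2),(0,3),(1,3)])" |
      "P = (5, [(0,1),(1,2),(2,3),(3,4)])"
    unfolding forbidden_def by auto
  then show False
  proof cases
    case 1
    then show False
      using no_cycle[of "[g 0, g 1, g 2]"] inV eq adj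
      by (auto simp: is_path_def pat_adj_def less_Suc_eq numeral_eq_Suc)
  next
    case 2
    then show False
      using no_cycle[of "[g 0, g 1, g 2, g 3]"] inV eq adj
      by (auto simp: is_path_def pat_adj_def less_Suc_eq numeral_eq_Suc)
  next
    case 3
    then show False
      using no_cycle[of "[g 0, g 1, g 3, g 2]"] inV eq adj
      by (auto simp: is_path_def pat_adj_def less_Suc_eq numeral_eq_Suc)
  next
    case 4
    then show False
      using no_cycle[of "[g 0, g 1, g 2, g 3, g 4]"] inV eq adj
      by (auto simp: is_path_def pat_adj_def less_Suc_eq numeral_eq_Suc)
  next
    case 5
    then show False
      using cross adj[of 0 2] adj[of 1 3] ord[of 0 1 2] ord[of 0 2 3]
      by (auto simp: crossing_free_def pat_adj_def cyc_pos_def)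
  next
    case 6
    then show False
      using cross adj[of 0 2] adj[of 1 3] ord[of 0 1 2] ord[of 0 2 3]
      by (auto simp: crossing_free_def pat_adj_def cyc_pos_def)
  next
    case 7
    then have "E (g 0) (g 1)" "E (g 1) (g 2)" "E (g 2) (g 3)" "E (g 3) (g 4)"
      using adj by (auto simp: pat_adj_def)
    moreover have "clockwise4 p (g 0) (g 1) (g 2) (g 3)" "clockwise4 p (g 4) (g 1) (g 2) (g 3)"
      using 7 ord[of 0 1 2] ord[of 0 2 3] ord[of 1 2 4] ord[of 2 3 4]
      by (auto simp: clockwise4_def cyc_pos_def)
    moreover have "\<And>x y. E x y \<Longrightarrow> E y x"
      using graph by (simp add: simple_graph_def)
    ultimately show False
      using admissible_layout_no_clockwise_P5[OF layout] by blast
  qed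
qed

section \<open>A graph with a cycle contains a forbidden pattern\<close>

lemma triangle_contains_forbidden:
  assumes graph: "simple_graph V E" and "inj_on p V" and "E x y" "E y z" "E z x"
  shows "\<exists>P\<in>set forbidden. contains_pattern V E (circ_order V p) P"
proof -
  have sym: "E a b \<Longrightarrow> E b a" and irrefl: "\<not> E a a" and inV: "E a b \<Longrightarrow> a \<in> V" for a b
    using graph unfolding simple_graph_def by blast+
  have clockwise: "contains_pattern V E (circ_order V p) (3, [(0,1),(1,2),(2,0)])"
    if "E a b" "E b c" "E c a" "cyc_pos p a b c" for a b c
    using that sym irrefl inV
    by (intro contains_pattern_if_cyclically_ordered[of "[a, b, c]"])
      (auto simp: pat_adj_def cyc_pos_def All_less_Suc numeral_eq_Suc)
  have "x \<noteq> y" "y \<noteq> z" "x \<noteq> z"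
    using assms(3-5) irrefl by metis+
  then have "p x \<noteq> p y" "p y \<noteq> p z" "p x \<noteq> p z"
    using assms(2-5) inV sym by (metis inj_on_contraD)+
  then have "cyc_pos p x y z \<or> cyc_pos p x z y"
    by (auto simp: cyc_pos_def)
  then show ?thesis
    using clockwise[of x y z] clockwise[of x z y] assms(3-5) sym by (auto simp: forbidden_def)
qed

lemma clockwise_quadruple_contains_pattern:
  assumes "{a, b, c, d} \<subseteq> V" "cyc_pos p a b c" "cyc_pos p c d a"
    and "xs \<in> {[a, b, c, d], [b, c, d, a], [c, d, a, b], [d, a, b, c]}"
    and "fst P = 4" "\<forall>i<4. \<forall>j<4. E (xs ! i) (xs ! j) \<longleftrightarrow> pat_adj P i j"
  shows "contains_pattern V E (circ_order V p) P"
proof (rule contains_pattern_if_cyclically_ordered)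
  have "cyc_pos p a b c" "cyc_pos p a b d" "cyc_pos p a c d" "cyc_pos p b c d"
    "cyc_pos p b c a" "cyc_pos p b d a" "cyc_pos p c d a" "cyc_pos p c d b"
    "cyc_pos p c a b" "cyc_pos p d a b" "cyc_pos p d a c" "cyc_pos p d b c"
    using assms(2,3) unfolding cyc_pos_def by auto
  then show "\<forall>l<fst P. \<forall>j<l. \<forall>i<j. cyc_pos p (xs ! i) (xs ! j) (xs ! l)"
    using assms(4,5) by (auto simp: All_less_Suc numeral_eq_Suc)
  have "distinct [a, b, c, d]"
    using assms(2,3) unfolding cyc_pos_def by auto
  then show "distinct xs"
    using assms(4) by auto
qed (use assms in auto)

lemma crossing_contains_forbidden:
  assumes graph: "simple_graph V E" and triangle_free: "\<And>x y z. E x y \<Longrightarrow> E y z \<Longrightarrow> \<not> E z x"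
    and "E a b" "E c d" "cyc_pos p a c b" "cyc_pos p b d a"
  shows "\<exists>P\<in>set forbidden. contains_pattern V E (circ_order V p) P"
proof -
  have sym: "E x y \<longleftrightarrow> E y x" and irrefl: "\<not> E x x" and inV: "E x y \<Longrightarrow> x \<in> V" for x y
    using graph unfolding simple_graph_def by blast+
  have edges: "E a b" "E b a" "E c d" "E d c"
    using assms(3,4) sym by blast+
  have found: "\<exists>P\<in>set forbidden. contains_pattern V E (circ_order V p) P"
    if "P \<in> set forbidden" "fst P = 4" "xs \<in> {[a, c, b, d], [c, b, d, a], [b, d, a, c], [d, a, c, b]}"
      "\<forall>i<4. \<forall>j<4. E (xs ! i) (xs ! j) \<longleftrightarrow> pat_adj P i j" for xs P
    using clockwise_quadruple_contains_pattern[of a c b d V p xs P E] that assms(5,6) edges inV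
    by blast
  have sides_sym: "E c a \<longleftrightarrow> E a c" "E b c \<longleftrightarrow> E c b" "E d b \<longleftrightarrow> E b d" "E a d \<longleftrightarrow> E d a"
    using sym by blast+
  \<comment> \<open>the sides of the quadrilateral \<open>a c b d\<close> that are edges: none gives (4), one gives (5),
    two opposite ones give (3)\<close>
  have "\<not> (E a c \<and> E c b)" "\<not> (E c b \<and> E b d)" "\<not> (E b d \<and> E d a)" "\<not> (E d a \<and> E a c)"
    using triangle_free edges sym by blast+
  then consider "\<not> E a c" "\<not> E c b" "\<not> E b d" "\<not> E d a"
    | "E a c" "\<not> E c b" "\<not> E b d" "\<not> E d a"
    | "\<not> E a c" "E c b" "\<not> E b d" "\<not> E d a"
    | "\<not> E a c" "\<not> E c b" "E b d" "\<not> E d a"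
    | "\<not> E a c" "\<not> E c b" "\<not> E b d" "E d a"
    | "E a c" "\<not> E c b" "E b d" "\<not> E d a"
    | "\<not> E a c" "E c b" "\<not> E b d" "E d a"
    by blast
  then show ?thesis
  proof cases
    case 1
    then show ?thesis
      by (intro found[of "(4, [(0,2),(1,3)])" "[a, c, b, d]"])
        (auto simp: forbidden_def pat_adj_def All_less_Suc numeral_eq_Suc edges irrefl sides_sym)
  next
    case 2
    then show ?thesis
      by (intro found[of "(4, [(0,2),(0,3),(1,3)])" "[c, b, d, a]"])
        (auto simp: forbidden_def pat_adj_def All_less_Suc numeral_eq_Suc edges irrefl sides_sym)
  next
    case 3
    then show ?thesis
      by (intro found[of "(4, [(0,2),(0,3),(1,3)])" "[b, d, a, c]"])
        (auto simp: forbidden_def pat_adj_def All_less_Suc numeral_eq_Suc edges irrefl sides_sym)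
  next
    case 4
    then show ?thesis
      by (intro found[of "(4, [(0,2),(0,3),(1,3)])" "[d, a, c, b]"])
        (auto simp: forbidden_def pat_adj_def All_less_Suc numeral_eq_Suc edges irrefl sides_sym)
  next
    case 5
    then show ?thesis
      by (intro found[of "(4, [(0,2),(0,3),(1,3)])" "[a, c, b, d]"])
        (auto simp: forbidden_def pat_adj_def All_less_Suc numeral_eq_Suc edges irrefl sides_sym)
  next
    case 6
    then show ?thesis
      by (intro found[of "(4, [(0,1),(1,3),(3,2),(2,0)])" "[a, c, b, d]"])
        (auto simp: forbidden_def pat_adj_def All_less_Suc numeral_eq_Suc edges irrefl sides_sym)
  next
    case 7
    then show ?thesis
      by (intro found[of "(4, [(0,1),(1,3),(3,2),(2,0)])" "[c, b, d, a]"])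
        (auto simp: forbidden_def pat_adj_def All_less_Suc numeral_eq_Suc edges irrefl sides_sym)
  qed
qed

lemma mod_add_right_cancel_nat: "((i::nat) + s) mod n = (j + s) mod n \<longleftrightarrow> i mod n = j mod n"
proof (cases "i \<le> j")
  case True
  then show ?thesis
    using mod_eq_dvd_iff_nat[of "i + s" "j + s" n] mod_eq_dvd_iff_nat[of i j n] by (simp add: eq_commute)
next
  case False
  then show ?thesis
    using mod_eq_dvd_iff_nat[of "j + s" "i + s" n] mod_eq_dvd_iff_nat[of j i n] by simp
qed

text \<open>A cycle of length \<open>n\<close> as an \<open>n\<close>-periodic sequence of vertices, so that rotating and
  reflecting it are reindexings.\<close>

definition cycle_seq :: "'a set \<Rightarrow> ('a \<Rightarrow> 'a \<Rightarrow> bool) \<Rightarrow> (nat \<Rightarrow> 'a) \<Rightarrow> nat \<Rightarrow> bool" where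
  "cycle_seq V E W n \<longleftrightarrow> 3 \<le> n \<and> (\<forall>i j. W i = W j \<longleftrightarrow> i mod n = j mod n) \<and>
     (\<forall>i. W i \<in> V) \<and> (\<forall>i. E (W i) (W (Suc i)))"

lemma cycle_seq_if_not_forest:
  assumes "\<not> is_forest V E"
  shows "\<exists>W n. cycle_seq V E W n"
proof -
  obtain cs where cs: "3 \<le> length cs" "is_path V E cs" "E (last cs) (hd cs)"
    using assms unfolding is_forest_iff_no_closed_path by blast
  let ?n = "length cs"
  have "0 < ?n" "cs \<noteq> []"
    using cs(1) by auto
  have "cycle_seq V E (\<lambda>i. cs ! (i mod ?n)) ?n"
    unfolding cycle_seq_def
  proof (intro conjI allI)
    fix i j
    show "cs ! (i mod ?n) = cs ! (j mod ?n) \<longleftrightarrow> i mod ?n = j mod ?n"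
      using cs(2) \<open>0 < ?n\<close> unfolding is_path_def by (intro nth_eq_iff_index_eq) auto
    show "cs ! (i mod ?n) \<in> V"
      using cs(2) \<open>0 < ?n\<close> unfolding is_path_def by (meson nth_mem mod_less_divisor subsetD)
    show "E (cs ! (i mod ?n)) (cs ! (Suc i mod ?n))"
    proof (cases "Suc (i mod ?n) = ?n")
      case True
      then have "Suc i mod ?n = 0" "i mod ?n = ?n - 1"
        by (simp_all add: mod_Suc)
      then show ?thesis
        using cs \<open>cs \<noteq> []\<close> by (simp add: last_conv_nth hd_conv_nth)
    next
      case False
      moreover have "i mod ?n < ?n"
        using \<open>0 < ?n\<close> by simp
      ultimately have "Suc i mod ?n = Suc (i mod ?n)" "Suc (i mod ?n) < ?n"
        by (simp_all add: mod_Suc)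
      then show ?thesis
        using cs(2) unfolding is_path_def by simp
    qed
  qed (use cs(1) in simp)
  then show ?thesis
    by blast
qed

lemma not_forest_shortest_cycle_seq:
  assumes "\<not> is_forest V E"
  obtains W n where "cycle_seq V E W n" "\<And>W' m. cycle_seq V E W' m \<Longrightarrow> n \<le> m"
proof -
  obtain W1 n1 where "cycle_seq V E W1 n1"
    using cycle_seq_if_not_forest[OF assms] by blast
  then obtain n where "\<exists>W. cycle_seq V E W n" "\<And>W' m. cycle_seq V E W' m \<Longrightarrow> n \<le> m"
    using Lattices_Big.ex_has_least_nat[of "\<lambda>m. \<exists>W. cycle_seq V E W m" n1 "\<lambda>m. m"] by blast
  then show thesis
    using that by blast
qed

lemma cycle_seq_shift: "cycle_seq V E W n \<Longrightarrow> cycle_seq V E (\<lambda>i. W (i + s)) n"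
  unfolding cycle_seq_def by (simp add: mod_add_right_cancel_nat)

lemma cycle_seq_reflect:
  assumes "cycle_seq V E W n" and sym: "\<And>x y. E x y \<Longrightarrow> E y x"
  shows "cycle_seq V E (\<lambda>i. W (n - i mod n)) n"
  unfolding cycle_seq_def
proof (intro conjI allI)
  have n: "3 \<le> n" and eq: "\<And>i j. W i = W j \<longleftrightarrow> i mod n = j mod n"
    and adj: "\<And>i. E (W i) (W (Suc i))"
    using assms(1) unfolding cycle_seq_def by blast+
  have minus_mod_inj: "(n - a) mod n = (n - b) mod n \<longleftrightarrow> a = b" if "a < n" "b < n" for a b
    using that by (cases "a = 0"; cases "b = 0") (simp_all, arith)
  fix i j
  show "W (n - i mod n) = W (n - j mod n) \<longleftrightarrow> i mod n = j mod n"
  proof -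
    have "W (n - i mod n) = W (n - j mod n) \<longleftrightarrow> (n - i mod n) mod n = (n - j mod n) mod n"
      by (rule eq)
    also have "\<dots> \<longleftrightarrow> i mod n = j mod n"
      using n by (intro minus_mod_inj) simp_all
    finally show ?thesis .
  qed
  show "W (n - i mod n) \<in> V"
    using assms(1) unfolding cycle_seq_def by blast
  show "E (W (n - i mod n)) (W (n - Suc i mod n))"
  proof (cases "Suc (i mod n) = n")
    case True
    then have "W (n - Suc i mod n) = W 0" "n - i mod n = Suc 0"
      using eq by (auto simp: mod_Suc)
    then show ?thesis
      using adj[of 0] sym by simp
  next
    case False
    then have "n - i mod n = Suc (n - Suc i mod n)"
      using n by (simp add: mod_Suc Suc_diff_Suc)
    then show ?thesis
      using adj sym by metis
  qed
qed (use assms(1) in \<open>simp add: cycle_seq_def\<close>)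

lemma cycle_seq_pos_eq_iff:
  assumes "cycle_seq V E W n" "inj_on p V" "i < n" "j < n"
  shows "p (W i) = p (W j) \<longleftrightarrow> i = j"
  using assms unfolding cycle_seq_def by (metis inj_on_eq_iff mod_less)

lemma cycle_seq_closing_edge:
  assumes "cycle_seq V E W n"
  shows "E (W (n - 1)) (W 0)"
proof -
  have "E (W (n - 1)) (W (Suc (n - 1)))"
    using assms unfolding cycle_seq_def by blast
  moreover have "Suc (n - 1) = n" "W n = W 0"
    using assms unfolding cycle_seq_def by simp_all
  ultimately show ?thesis
    by metis
qed

lemma shortest_cycle_seq_chordless:
  assumes cyc: "cycle_seq V E W n" and shortest: "\<And>W' m. cycle_seq V E W' m \<Longrightarrow> n \<le> m"
    and sym: "\<And>x y. E x y \<Longrightarrow> E y x" and "i < j" "j < n" and chord: "E (W i) (W j)"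
  shows "j = Suc i \<or> (i = 0 \<and> j = n - 1)"
proof (rule ccontr)
  assume no_chord: "\<not> (j = Suc i \<or> (i = 0 \<and> j = n - 1))"
  define m where "m = Suc (j - i)"
  have "3 \<le> m" "m < n" "i + m \<le> n"
    using no_chord \<open>i < j\<close> \<open>j < n\<close> by (auto simp: m_def)
  have eq: "W a = W b \<longleftrightarrow> a mod n = b mod n" and adj: "E (W a) (W (Suc a))" for a b
    using cyc unfolding cycle_seq_def by blast+
  have "cycle_seq V E (\<lambda>k. W (i + k mod m)) m"
    unfolding cycle_seq_def
  proof (intro conjI allI)
    fix k l
    have "k mod m < m" "l mod m < m"
      using \<open>3 \<le> m\<close> by simp_all
    then have "i + k mod m < n" "i + l mod m < n"
      using \<open>i + m \<le> n\<close> by linarith+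
    then show "W (i + k mod m) = W (i + l mod m) \<longleftrightarrow> k mod m = l mod m"
      using eq by simp
    show "W (i + k mod m) \<in> V"
      using cyc unfolding cycle_seq_def by blast
    show "E (W (i + k mod m)) (W (i + Suc k mod m))"
    proof (cases "Suc (k mod m) = m")
      case True
      then have "i + k mod m = j" "Suc k mod m = 0"
        using \<open>i < j\<close> by (auto simp: m_def mod_Suc)
      then show ?thesis
        using sym[OF chord] by simp
    next
      case False
      then show ?thesis
        using adj by (simp add: mod_Suc)
    qed
  qed (rule \<open>3 \<le> m\<close>)
  then show False
    using shortest \<open>m < n\<close> by fastforce
qed

lemma shortest_cycle_seq_adj_iff:
  assumes graph: "simple_graph V E" and cyc: "cycle_seq V E W n"
    and shortest: "\<And>W' m. cycle_seq V E W' m \<Longrightarrow> n \<le> m" and "i < n" "j < n"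
  shows "E (W i) (W j) \<longleftrightarrow> j = Suc i \<or> i = Suc j \<or> (i = 0 \<and> j = n - 1) \<or> (j = 0 \<and> i = n - 1)"
proof -
  have sym: "\<And>x y. E x y \<Longrightarrow> E y x" and irrefl: "\<And>x. \<not> E x x"
    using graph unfolding simple_graph_def by blast+
  have chordless: "b = Suc a \<or> (a = 0 \<and> b = n - 1)" if "a < b" "b < n" "E (W a) (W b)" for a b
    using shortest_cycle_seq_chordless[of V E W n a b] cyc shortest sym that by blast
  show ?thesis
  proof
    assume "E (W i) (W j)"
    then show "j = Suc i \<or> i = Suc j \<or> (i = 0 \<and> j = n - 1) \<or> (j = 0 \<and> i = n - 1)"
      using chordless[of i j] chordless[of j i] sym irrefl assms(4,5)
      by (cases i j rule: linorder_cases) auto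
  next
    assume "j = Suc i \<or> i = Suc j \<or> (i = 0 \<and> j = n - 1) \<or> (j = 0 \<and> i = n - 1)"
    then show "E (W i) (W j)"
      using cyc cycle_seq_closing_edge[OF cyc] sym unfolding cycle_seq_def by auto
  qed
qed

lemma cycle_seq_normalize:
  fixes p :: "'a \<Rightarrow> nat"
  assumes cyc: "cycle_seq V E W n" and inj: "inj_on p V" and sym: "\<And>x y. E x y \<Longrightarrow> E y x"
  obtains W' where "cycle_seq V E W' n" "\<And>i. 0 < i \<Longrightarrow> i < n \<Longrightarrow> p (W' 0) < p (W' i)"
    "p (W' 1) < p (W' (n - 1))"
proof -
  have n: "3 \<le> n" and per: "\<And>i. W (i mod n) = W i"
    using cyc unfolding cycle_seq_def by auto
  obtain s where "s < n" and s_min: "\<And>i. i < n \<Longrightarrow> p (W s) \<le> p (W i)"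
    using Lattices_Big.ex_has_least_nat[of "\<lambda>i. i < n" 0 "\<lambda>i. p (W i)"] n by auto
  define W1 where "W1 i = W (i + s)" for i
  have cyc1: "cycle_seq V E W1 n"
    unfolding W1_def by (rule cycle_seq_shift[OF cyc])
  have min1: "p (W1 0) < p (W1 i)" if "0 < i" "i < n" for i
  proof -
    have "p (W1 0) \<le> p (W1 i)"
      using s_min[of "(i + s) mod n"] n per[of "i + s"] by (simp add: W1_def)
    moreover have "p (W1 0) \<noteq> p (W1 i)"
      using cycle_seq_pos_eq_iff[OF cyc1 inj, of 0 i] that by simp
    ultimately show ?thesis
      by simp
  qed
  show thesis
  proof (cases "p (W1 1) < p (W1 (n - 1))")
    case True
    with cyc1 min1 show thesis
      by (rule that)
  next
    case False
    define W2 where "W2 i = W1 (n - i mod n)" for i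
    have cyc2: "cycle_seq V E W2 n"
      unfolding W2_def by (rule cycle_seq_reflect[OF cyc1 sym])
    have W2: "W2 0 = W1 0" "W2 i = W1 (n - i)" if "0 < i" "i < n" for i
      using cyc1 that unfolding W2_def cycle_seq_def by auto
    have "p (W1 1) \<noteq> p (W1 (n - 1))"
      using cycle_seq_pos_eq_iff[OF cyc1 inj, of 1 "n - 1"] n by simp
    then have "p (W2 1) < p (W2 (n - 1))"
      using False W2[of 1] W2[of "n - 1"] n by simp
    moreover have "p (W2 0) < p (W2 i)" if "0 < i" "i < n" for i
      using min1[of "n - i"] W2[OF that] that by simp
    ultimately show thesis
      using cyc2 that by blast
  qed
qed

lemma nat_seq_crosses_level:
  fixes f :: "nat \<Rightarrow> nat"
  assumes "a \<le> b" "f a < c" "c \<le> f b"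
  shows "\<exists>t. a \<le> t \<and> t < b \<and> f t < c \<and> c \<le> f (Suc t)"
  using assms
proof (induction b)
  case (Suc b)
  show ?case
  proof (cases "a \<le> b \<and> c \<le> f b")
    case True
    then obtain t where "a \<le> t" "t < b" "f t < c" "c \<le> f (Suc t)"
      using Suc.IH Suc.prems(2) by blast
    then show ?thesis
      by (intro exI[of _ t]) simp
  next
    case False
    then show ?thesis
      using Suc.prems by (intro exI[of _ b]) (auto simp: le_Suc_eq)
  qed
qed simp

text \<open>A first descent along the cycle, from \<open>W (Suc i)\<close> down to some \<open>W j\<close>, makes the edge
  \<open>W i W (Suc i)\<close> cross either the closing edge \<open>W (n - 1) W 0\<close> or the later edge where the
  cycle climbs back above \<open>W (Suc i)\<close>.\<close>

lemma crossing_free_cycle_seq_increasing: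
  fixes p :: "'a \<Rightarrow> nat"
  assumes cyc: "cycle_seq V E W n" and inj: "inj_on p V" and cross: "crossing_free E p"
    and sym: "\<And>x y. E x y \<Longrightarrow> E y x"
    and min: "\<And>i. 0 < i \<Longrightarrow> i < n \<Longrightarrow> p (W 0) < p (W i)"
    and first_step: "p (W 1) < p (W (n - 1))"
  shows "\<forall>j. i < j \<longrightarrow> j < n \<longrightarrow> p (W i) < p (W j)"
proof (induction i)
  case 0
  then show ?case
    using min by blast
next
  case (Suc i)
  have adj: "\<And>k. E (W k) (W (Suc k))"
    using cyc unfolding cycle_seq_def by blast
  note no_cross = crossing_free_no_interleaving[OF cross]
  show ?case
  proof (intro allI impI)
    fix j assume j: "Suc i < j" "j < n"
    show "p (W (Suc i)) < p (W j)"
    proof (rule ccontr)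
      assume "\<not> p (W (Suc i)) < p (W j)"
      then have below: "p (W j) < p (W (Suc i))"
        using cycle_seq_pos_eq_iff[OF cyc inj, of j "Suc i"] j by linarith
      show False
      proof (cases "p (W (n - 1)) < p (W (Suc i))")
        case True
        then have "0 < i"
          using first_step by (cases i) auto
        then have "p (W 0) < p (W i)" "p (W i) < p (W (n - 1))"
          using min Suc.IH j by auto
        then show False
          using no_cross[OF sym[OF cycle_seq_closing_edge[OF cyc]] adj[of i]] True by blast
      next
        case False
        then have above: "p (W (Suc i)) < p (W (n - 1))"
          using cycle_seq_pos_eq_iff[OF cyc inj, of "n - 1" "Suc i"] j by fastforce
        then obtain t where t: "j \<le> t" "t < n - 1" "p (W t) < p (W (Suc i))"
          "p (W (Suc i)) \<le> p (W (Suc t))"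
          using nat_seq_crosses_level[of j "n - 1" "\<lambda>k. p (W k)" "p (W (Suc i))"] below j
          by fastforce
        moreover have "p (W (Suc i)) \<noteq> p (W (Suc t))"
          using cycle_seq_pos_eq_iff[OF cyc inj, of "Suc i" "Suc t"] t j by simp
        moreover have "p (W i) < p (W t)" "p (W i) < p (W (Suc i))"
          using Suc.IH t j by auto
        ultimately show False
          using no_cross[OF adj[of i] adj[of t]] by simp
      qed
    qed
  qed
qed

lemma increasing_induced_cycle_contains_forbidden:
  fixes p :: "'a \<Rightarrow> nat"
  assumes cyc: "cycle_seq V E W n" and "4 \<le> n"
    and adj: "\<And>i j. i < n \<Longrightarrow> j < n \<Longrightarrow>
      E (W i) (W j) \<longleftrightarrow> j = Suc i \<or> i = Suc j \<or> (i = 0 \<and> j = n - 1) \<or> (j = 0 \<and> i = n - 1)"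
    and increasing: "\<And>i j. i < j \<Longrightarrow> j < n \<Longrightarrow> p (W i) < p (W j)"
  shows "\<exists>P\<in>set forbidden. contains_pattern V E (circ_order V p) P"
proof -
  have initial_segment: "contains_pattern V E (circ_order V p) P"
    if "fst P \<le> n" "\<forall>i<fst P. \<forall>j<fst P. E (W i) (W j) \<longleftrightarrow> pat_adj P i j" for P
  proof (rule contains_pattern_if_cyclically_ordered[of "map W [0..<fst P]"])
    show "distinct (map W [0..<fst P])"
      using that(1) cyc unfolding cycle_seq_def by (auto simp: distinct_map inj_on_def)
    show "\<forall>l<fst P. \<forall>j<l. \<forall>i<j. cyc_pos p (map W [0..<fst P] ! i) (map W [0..<fst P] ! j) (map W [0..<fst P] ! l)"
      using increasing that(1) by (auto simp: cyc_pos_def)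
  qed (use that cyc in \<open>auto simp: cycle_seq_def\<close>)
  consider "n = 4" | "n = 5" | "6 \<le> n"
    using \<open>4 \<le> n\<close> by linarith
  then show ?thesis
  proof cases
    case 1
    then have "contains_pattern V E (circ_order V p) (4, [(0,1),(1,2),(2,3),(3,0)])"
      by (intro initial_segment) (auto simp: adj pat_adj_def All_less_Suc numeral_eq_Suc)
    then show ?thesis
      by (auto simp: forbidden_def)
  next
    case 2
    then have "contains_pattern V E (circ_order V p) (5, [(0,1),(1,2),(2,3),(3,4),(4,0)])"
      by (intro initial_segment) (auto simp: adj pat_adj_def All_less_Suc numeral_eq_Suc)
    then show ?thesis
      by (auto simp: forbidden_def)
  next
    case 3
    then have "contains_pattern V E (circ_order V p) (5, [(0,1),(1,2),(2,3),(3,4)])"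
      by (intro initial_segment) (auto simp: adj pat_adj_def All_less_Suc numeral_eq_Suc)
    then show ?thesis
      by (auto simp: forbidden_def)
  qed
qed

lemma not_forest_contains_forbidden:
  fixes p :: "'a \<Rightarrow> nat"
  assumes graph: "simple_graph V E" and inj: "inj_on p V" and "\<not> is_forest V E"
  shows "\<exists>P\<in>set forbidden. contains_pattern V E (circ_order V p) P"
proof -
  have sym: "\<And>x y. E x y \<Longrightarrow> E y x"
    using graph unfolding simple_graph_def by blast
  consider (triangle) x y z where "E x y" "E y z" "E z x"
    | (crossing) a b c d where "\<And>x y z. E x y \<Longrightarrow> E y z \<Longrightarrow> \<not> E z x"
        "E a b" "E c d" "cyc_pos p a c b" "cyc_pos p b d a"
    | (neither) "\<And>x y z. E x y \<Longrightarrow> E y z \<Longrightarrow> \<not> E z x" "crossing_free E p"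
  proof (cases "\<exists>x y z. E x y \<and> E y z \<and> E z x")
    case False
    then show ?thesis
      using that(2,3) unfolding crossing_free_def by blast
  qed (use that(1) in blast)
  then show ?thesis
  proof cases
    case triangle
    then show ?thesis
      using triangle_contains_forbidden[OF graph inj] by blast
  next
    case crossing
    then show ?thesis
      using crossing_contains_forbidden[OF graph] by blast
  next
    case neither
    obtain W0 n where cyc0: "cycle_seq V E W0 n" and shortest: "\<And>W' m. cycle_seq V E W' m \<Longrightarrow> n \<le> m"
      using not_forest_shortest_cycle_seq[OF \<open>\<not> is_forest V E\<close>] by blast
    obtain W where cyc: "cycle_seq V E W n"
      and min: "\<And>i. 0 < i \<Longrightarrow> i < n \<Longrightarrow> p (W 0) < p (W i)" and "p (W 1) < p (W (n - 1))"
      using cycle_seq_normalize[OF cyc0 inj sym] by blast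
    have "n \<noteq> 3"
    proof
      assume "n = 3"
      moreover have adj: "E (W k) (W (Suc k))" for k
        using cyc unfolding cycle_seq_def by blast
      ultimately have "E (W 0) (W 1)" "E (W 1) (W 2)" "E (W 2) (W 0)"
        using adj[of 0] adj[of 1] cycle_seq_closing_edge[OF cyc] by (simp_all add: numeral_2_eq_2)
      then show False
        using neither(1) by blast
    qed
    then have "4 \<le> n"
      using cyc unfolding cycle_seq_def by simp
    show ?thesis
    proof (rule increasing_induced_cycle_contains_forbidden[OF cyc \<open>4 \<le> n\<close>])
      show "E (W i) (W j) \<longleftrightarrow> j = Suc i \<or> i = Suc j \<or> (i = 0 \<and> j = n - 1) \<or> (j = 0 \<and> i = n - 1)"
        if "i < n" "j < n" for i j
        using shortest_cycle_seq_adj_iff[OF graph cyc _ that] shortest by blast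
      show "\<And>i j. i < j \<Longrightarrow> j < n \<Longrightarrow> p (W i) < p (W j)"
        using crossing_free_cycle_seq_increasing[OF cyc inj neither(2) sym min
            \<open>p (W 1) < p (W (n - 1))\<close>] by blast
    qed
  qed
qed

theorem theorem4:
  fixes V :: "'a set" and E :: "'a \<Rightarrow> 'a \<Rightarrow> bool"
  assumes "simple_graph V E"
  shows "admits_F_free_circular_ordering V E \<longleftrightarrow> is_forest V E"
proof
  assume "admits_F_free_circular_ordering V E"
  then obtain C where C: "circular_ordering V C" and F_free: "\<forall>P\<in>set forbidden. \<not> contains_pattern V E C P"
    unfolding admits_F_free_circular_ordering_def by blast
  from C obtain p where "inj_on p V" "C = circ_order V p"
    by (rule circular_orderingE)
  then show "is_forest V E"
    using not_forest_contains_forbidden[OF assms] F_free by blast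
next
  assume "is_forest V E"
  then obtain p col where layout: "admissible_layout V E p col"
    using forest_has_admissible_layout[OF assms] by blast
  then have "circular_ordering V (circ_order V p)"
    unfolding admissible_layout_def by (blast intro: circular_ordering_circ_order)
  then show "admits_F_free_circular_ordering V E"
    unfolding admits_F_free_circular_ordering_def
    using admissible_layout_avoids_forbidden[OF assms \<open>is_forest V E\<close> layout] by blast
qed

end
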